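(* Suppose (S) and (L) hold and: (MA1) $\operatorname{cov}(W_i^K,W_j^K)=\mathbb 1(i=j)+\rho\mathbb 1(|i-j|=1)$ for $i,j\in\{1,\dots,K\}$, with $|\rho|<1/2$; (MA2) there is $C<\infty$ with $\sup_{i\le K}|\pi_i^K|\le C/\sqrt K$ for all $K$; (MA3) $\rho\sum_{i=1}^{K-1}\pi_i^K\pi_{i+1}^K/\sum_{i=1}^K(\pi_i^K)^2$ converges to a value in $[-\infty,\infty]$ as $K\to\infty$; (MA4) there is $\epsilon>0$ with $\operatorname{var}(\sum_{i=1}^K\pi_i^KW_i^K)>\epsilon$ for all $K$. Then (P) holds.
   Context: For each $K$, $W^K=(W_1^K,\dots,W_K^K)$ is a random vector and $\pi^K\in\mathbb R^K$. $S\in\{0,1\}^K$ is random, independent of everything else, with moments $\operatorname{var}_S$ etc.; $d_1=\sum_iS_i$, $d_2=K-d_1$. (S) $S$ is uniform over vectors in $\{0,1\}^K$ with exactly $d_1$ ones. (L) $d_1,K\to\infty$ with $d_2/d_1\to r\in(0,\infty)$. (P): (P1) there are $0<\epsilon\le M<\infty$ with $\epsilon\le\operatorname{var}(\sum_i\pi_i^KW_i^K)\le M$ for all $K$; (P2) $\operatorname{var}_S(\sum_{i,j}S_iS_j\operatorname{cov}(\pi_i^KW_i^K,\pi_j^KW_j^K))\to0$ and the same with $S_i,S_j$ replaced by $1-S_i,1-S_j$; (P3) $\sum_i\operatorname{var}(\pi_i^KW_i^K)/\operatorname{var}(\sum_i\pi_i^KW_i^K)$ converges to a finite limit. *)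

theory Defs
  imports "HOL-Probability.Probability"
begin

definition cov :: "'a measure \<Rightarrow> ('a \<Rightarrow> real) \<Rightarrow> ('a \<Rightarrow> real) \<Rightarrow> real" where
  "cov M X Y = (\<integral>x. (X x - (\<integral>y. X y \<partial>M)) * (Y x - (\<integral>y. Y y \<partial>M)) \<partial>M)"

definition var :: "'a measure \<Rightarrow> ('a \<Rightarrow> real) \<Rightarrow> real" where
  "var M X = (\<integral>x. (X x - (\<integral>y. X y \<partial>M))\<^sup>2 \<partial>M)"

text \<open>The law of S for given K and d1: uniform over the 0/1 vectors on {1..K} with exactly
  d1 ones, encoded by their support (the set of indices i with S_i = 1).\<close>
definition sel_law :: "nat \<Rightarrow> nat \<Rightarrow> nat set pmf" where
  "sel_law K d = pmf_of_set {T. T \<subseteq> {1..K} \<and> card T = d}"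

definition cond_P :: "(nat \<Rightarrow> 'a measure) \<Rightarrow> (nat \<Rightarrow> nat \<Rightarrow> 'a \<Rightarrow> real)
    \<Rightarrow> (nat \<Rightarrow> nat \<Rightarrow> real) \<Rightarrow> (nat \<Rightarrow> nat) \<Rightarrow> bool" where
  "cond_P M W p d1 \<longleftrightarrow>
     (\<exists>\<epsilon> Mb. 0 < \<epsilon> \<and> \<epsilon> \<le> Mb \<and>
        (\<forall>K\<ge>1. \<epsilon> \<le> var (M K) (\<lambda>x. \<Sum>i=1..K. p K i * W K i x)
               \<and> var (M K) (\<lambda>x. \<Sum>i=1..K. p K i * W K i x) \<le> Mb))
   \<and> (\<lambda>K. var (measure_pmf (sel_law K (d1 K)))
          (\<lambda>T. \<Sum>i\<in>T. \<Sum>j\<in>T. cov (M K) (\<lambda>x. p K i * W K i x) (\<lambda>x. p K j * W K j x)))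
       \<longlonglongrightarrow> 0
   \<and> (\<lambda>K. var (measure_pmf (sel_law K (d1 K)))
          (\<lambda>T. \<Sum>i\<in>{1..K} - T. \<Sum>j\<in>{1..K} - T.
                 cov (M K) (\<lambda>x. p K i * W K i x) (\<lambda>x. p K j * W K j x)))
       \<longlonglongrightarrow> 0
   \<and> (\<exists>L::real. (\<lambda>K. (\<Sum>i=1..K. var (M K) (\<lambda>x. p K i * W K i x))
                      / var (M K) (\<lambda>x. \<Sum>i=1..K. p K i * W K i x)) \<longlonglongrightarrow> L)"

end

theory Submission
  imports Defs
begin

text \<open>
  Under (MA1), \<open>Var(\<Sum>i. \<pi>_i W_i) = \<Sum>i. \<pi>_i^2 + 2\<rho> \<Sum>i. \<pi>_i \<pi>_(i+1)\<close>. The adjacent sum is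
  dominated by the sum of squares and \<open>\<bar>\<rho>\<bar> < 1/2\<close>, so the variance is at most
  \<open>2 \<Sum>i. \<pi>_i^2 \<le> 2 C^2\<close>, giving (P1); and the ratio in (P3) is \<open>1 / (1 + 2 t_K)\<close>, where
  \<open>t_K\<close> is the quantity of (MA3), bounded by \<open>\<bar>\<rho>\<bar>\<close>, so its limit is finite.

  For (P2), \<open>\<Sum>i,j\<in>T. c_ij\<close> is a quadratic form in the indicator of a uniform random
  \<open>d\<close>-subset \<open>T\<close>, with a banded coefficient matrix whose entries are \<open>O(1/K)\<close> by (MA2).
  Its variance is \<open>\<Sum> c_ij c_kl (P({i,j,k,l} \<subseteq> T) - P({i,j} \<subseteq> T) P({k,l} \<subseteq> T))\<close>.
  Inclusion probabilities of a uniform subset are submultiplicative, so the terms with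
  \<open>{i,j}\<close> and \<open>{k,l}\<close> disjoint are nonpositive; only \<open>O(K)\<close> quadruples remain, each of
  size \<open>O(1/K^2)\<close>, and the variance is \<open>O(1/K)\<close>. The complement of \<open>T\<close> is again a
  uniform subset, which handles \<open>1 - S\<close>.
\<close>

section \<open>Covariances of square-integrable variables\<close>

lemma abs_mult_le_half_sum_squares:
  fixes a b :: real
  shows "\<bar>a * b\<bar> \<le> (a\<^sup>2 + b\<^sup>2) / 2"
  using sum_squares_bound[of "\<bar>a\<bar>" "\<bar>b\<bar>"] by (simp add: abs_mult)

lemma integrable_mult_of_square_integrable:
  fixes f g :: "'a \<Rightarrow> real"
  assumes "f \<in> borel_measurable M" "integrable M (\<lambda>x. (f x)\<^sup>2)"
    and "g \<in> borel_measurable M" "integrable M (\<lambda>x. (g x)\<^sup>2)"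
  shows "integrable M (\<lambda>x. f x * g x)"
proof (rule Bochner_Integration.integrable_bound)
  show "integrable M (\<lambda>x. (f x)\<^sup>2 + (g x)\<^sup>2)" "(\<lambda>x. f x * g x) \<in> borel_measurable M"
    using assms by simp_all
  have "\<bar>f x * g x\<bar> \<le> (f x)\<^sup>2 + (g x)\<^sup>2" for x
    using abs_mult_le_half_sum_squares[of "f x" "g x"] zero_le_power2[of "f x"] zero_le_power2[of "g x"]
    by argo
  then show "AE x in M. norm (f x * g x) \<le> norm ((f x)\<^sup>2 + (g x)\<^sup>2)"
    by simp
qed

lemma cov_cmult: "cov M (\<lambda>x. a * X x) (\<lambda>x. b * Y x) = a * b * cov M X Y"
proof -
  have "cov M (\<lambda>x. a * X x) (\<lambda>x. b * Y x) =
      (\<integral>x. a * b * ((X x - (\<integral>y. X y \<partial>M)) * (Y x - (\<integral>y. Y y \<partial>M))) \<partial>M)"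
    unfolding cov_def by (simp add: algebra_simps)
  then show ?thesis unfolding cov_def by simp
qed

lemma var_eq_cov: "var M X = cov M X X"
  unfolding var_def cov_def by (simp add: power2_eq_square)

lemma var_nonneg: "0 \<le> var M X"
  unfolding var_def by (simp add: integral_nonneg_AE)

lemma var_sum_eq_sum_cov:
  fixes X :: "'i \<Rightarrow> 'a \<Rightarrow> real"
  assumes "prob_space M" "finite I"
    and meas: "\<And>i. i \<in> I \<Longrightarrow> X i \<in> borel_measurable M"
    and sq: "\<And>i. i \<in> I \<Longrightarrow> integrable M (\<lambda>x. (X i x)\<^sup>2)"
  shows "var M (\<lambda>x. \<Sum>i\<in>I. X i x) = (\<Sum>i\<in>I. \<Sum>j\<in>I. cov M (X i) (X j))"
proof -
  interpret prob_space M by fact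
  define \<mu> where "\<mu> i = (\<integral>y. X i y \<partial>M)" for i
  have int: "integrable M (X i)" if "i \<in> I" for i
    using square_integrable_imp_integrable meas sq that by blast
  have int_prod: "integrable M (\<lambda>x. (X i x - \<mu> i) * (X j x - \<mu> j))" if "i \<in> I" "j \<in> I" for i j
  proof -
    have "integrable M (\<lambda>x. X i x * X j x)"
      using that by (intro integrable_mult_of_square_integrable meas sq)
    then show ?thesis
      using int that by (simp add: algebra_simps)
  qed
  have "(\<integral>y. (\<Sum>i\<in>I. X i y) \<partial>M) = (\<Sum>i\<in>I. \<mu> i)"
    unfolding \<mu>_def using int by (simp add: integral_sum)
  then have "var M (\<lambda>x. \<Sum>i\<in>I. X i x) =
      (\<integral>x. (\<Sum>i\<in>I. \<Sum>j\<in>I. (X i x - \<mu> i) * (X j x - \<mu> j)) \<partial>M)"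
    unfolding var_def power2_eq_square by (simp add: sum_subtractf[symmetric] sum_product)
  also have "\<dots> = (\<Sum>i\<in>I. \<Sum>j\<in>I. (\<integral>x. (X i x - \<mu> i) * (X j x - \<mu> j) \<partial>M))"
    using int_prod by (simp add: integral_sum)
  finally show ?thesis unfolding cov_def \<mu>_def .
qed

section \<open>Tridiagonal quadratic forms\<close>

lemma sum_sum_diagonal:
  fixes q :: "nat \<Rightarrow> real"
  shows "(\<Sum>i=1..K. \<Sum>j=1..K. q i * q j * (if i = j then 1 else 0)) = (\<Sum>i=1..K. (q i)\<^sup>2)"
  by (intro sum.cong refl) (simp add: if_distrib power2_eq_square cong: if_cong)

lemma sum_sum_adjacent:
  fixes q :: "nat \<Rightarrow> real"
  shows "(\<Sum>i=1..K. \<Sum>j=1..K. q i * q j * (if \<bar>int i - int j\<bar> = 1 then 1 else 0)) =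
    2 * (\<Sum>i\<in>{1..<K}. q i * q (i+1))"
proof (induction K)
  case 0
  then show ?case by simp
next
  case (Suc K)
  have new_row: "(\<Sum>j=1..K. q (Suc K) * q j * (if \<bar>int (Suc K) - int j\<bar> = 1 then 1 else 0)) =
      (if K \<ge> 1 then q K * q (Suc K) else 0)"
  proof -
    have "(\<Sum>j=1..K. q (Suc K) * q j * (if \<bar>int (Suc K) - int j\<bar> = 1 then 1 else 0)) =
        (\<Sum>j\<in>{1..K}. if j = K then q (Suc K) * q j else 0)"
      by (rule sum.cong) auto
    then show ?thesis by simp
  qed
  have new_col: "(\<Sum>i=1..K. q i * q (Suc K) * (if \<bar>int i - int (Suc K)\<bar> = 1 then 1 else 0)) =
      (if K \<ge> 1 then q K * q (Suc K) else 0)"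
  proof -
    have "(\<Sum>i=1..K. q i * q (Suc K) * (if \<bar>int i - int (Suc K)\<bar> = 1 then 1 else 0)) =
        (\<Sum>i\<in>{1..K}. if i = K then q i * q (Suc K) else 0)"
      by (rule sum.cong) auto
    then show ?thesis by simp
  qed
  have "(\<Sum>i=1..Suc K. \<Sum>j=1..Suc K. q i * q j * (if \<bar>int i - int j\<bar> = 1 then 1 else 0)) =
      (\<Sum>i=1..K. \<Sum>j=1..K. q i * q j * (if \<bar>int i - int j\<bar> = 1 then 1 else 0))
      + (\<Sum>i=1..K. q i * q (Suc K) * (if \<bar>int i - int (Suc K)\<bar> = 1 then 1 else 0))
      + (\<Sum>j=1..K. q (Suc K) * q j * (if \<bar>int (Suc K) - int j\<bar> = 1 then 1 else 0))"
    by (simp add: sum.distrib)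
  also have "\<dots> = 2 * (\<Sum>i\<in>{1..<Suc K}. q i * q (i+1))"
    unfolding Suc.IH new_row new_col by (cases "K = 0") auto
  finally show ?case .
qed

lemma abs_sum_adjacent_le_sum_squares:
  fixes q :: "nat \<Rightarrow> real"
  shows "\<bar>\<Sum>i\<in>{1..<K}. q i * q (i+1)\<bar> \<le> (\<Sum>i=1..K. (q i)\<^sup>2)"
proof -
  have shifted: "(\<Sum>i\<in>{1..<K}. (q (i+1))\<^sup>2) \<le> (\<Sum>i=1..K. (q i)\<^sup>2)"
  proof -
    have "(\<Sum>i\<in>Suc ` {1..<K}. (q i)\<^sup>2) = (\<Sum>i\<in>{1..<K}. (q (i+1))\<^sup>2)"
      by (rule sum.reindex_cong[of Suc]) auto
    then have "(\<Sum>i\<in>{1..<K}. (q (i+1))\<^sup>2) = (\<Sum>i\<in>Suc ` {1..<K}. (q i)\<^sup>2)"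
      by simp
    also have "\<dots> \<le> (\<Sum>i=1..K. (q i)\<^sup>2)"
      by (intro sum_mono2) auto
    finally show ?thesis .
  qed
  have unshifted: "(\<Sum>i\<in>{1..<K}. (q i)\<^sup>2) \<le> (\<Sum>i=1..K. (q i)\<^sup>2)"
    by (intro sum_mono2) auto
  have "\<bar>\<Sum>i\<in>{1..<K}. q i * q (i+1)\<bar> \<le> (\<Sum>i\<in>{1..<K}. ((q i)\<^sup>2 + (q (i+1))\<^sup>2) / 2)"
    using abs_mult_le_half_sum_squares by (intro order_trans[OF sum_abs] sum_mono)
  also have "\<dots> = ((\<Sum>i\<in>{1..<K}. (q i)\<^sup>2) + (\<Sum>i\<in>{1..<K}. (q (i+1))\<^sup>2)) / 2"
    by (simp add: sum.distrib sum_divide_distrib[symmetric])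
  also have "\<dots> \<le> (\<Sum>i=1..K. (q i)\<^sup>2)"
    using shifted unshifted by simp
  finally show ?thesis .
qed

lemma var_sum_tridiagonal:
  fixes W :: "nat \<Rightarrow> 'a \<Rightarrow> real" and p :: "nat \<Rightarrow> real"
  assumes "prob_space M"
    and meas: "\<And>i. i \<in> {1..K} \<Longrightarrow> W i \<in> borel_measurable M"
    and sq: "\<And>i. i \<in> {1..K} \<Longrightarrow> integrable M (\<lambda>x. (W i x)\<^sup>2)"
    and cov_W: "\<And>i j. i \<in> {1..K} \<Longrightarrow> j \<in> {1..K} \<Longrightarrow> cov M (W i) (W j) =
        (if i = j then 1 else 0) + \<rho> * (if \<bar>int i - int j\<bar> = 1 then 1 else 0)"
  shows "var M (\<lambda>x. \<Sum>i=1..K. p i * W i x) =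
    (\<Sum>i=1..K. (p i)\<^sup>2) + 2 * \<rho> * (\<Sum>i\<in>{1..<K}. p i * p (i+1))"
proof -
  have "var M (\<lambda>x. \<Sum>i=1..K. p i * W i x) =
      (\<Sum>i=1..K. \<Sum>j=1..K. cov M (\<lambda>x. p i * W i x) (\<lambda>x. p j * W j x))"
    using meas sq by (intro var_sum_eq_sum_cov \<open>prob_space M\<close>) (auto simp: power_mult_distrib)
  also have "\<dots> = (\<Sum>i=1..K. \<Sum>j=1..K. p i * p j * (if i = j then 1 else 0))
      + \<rho> * (\<Sum>i=1..K. \<Sum>j=1..K. p i * p j * (if \<bar>int i - int j\<bar> = 1 then 1 else 0))"
    by (simp add: cov_cmult cov_W distrib_left sum.distrib sum_distrib_left algebra_simps)
  also have "\<dots> = (\<Sum>i=1..K. (p i)\<^sup>2) + 2 * \<rho> * (\<Sum>i\<in>{1..<K}. p i * p (i+1))"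
    using sum_sum_diagonal[of p K] sum_sum_adjacent[of p K] by (simp add: mult.assoc)
  finally show ?thesis .
qed

section \<open>Uniform random subsets\<close>

text \<open>The probability that a fixed \<open>a\<close>-element subset of a \<open>K\<close>-set lies in a uniformly
  random \<open>d\<close>-element subset.\<close>

definition incl_prob :: "nat \<Rightarrow> nat \<Rightarrow> nat \<Rightarrow> real" where
  "incl_prob K d a = (\<Prod>j<a. (real d - real j) / (real K - real j))"

lemma incl_prob_eq_0: "d < a \<Longrightarrow> incl_prob K d a = 0"
  unfolding incl_prob_def by (rule prod_zero) (auto intro: bexI[of _ d])

lemma incl_prob_Suc: "incl_prob K d (Suc a) = incl_prob K d a * ((real d - real a) / (real K - real a))"
  unfolding incl_prob_def by simp

lemma incl_prob_nonneg: "d \<le> K \<Longrightarrow> 0 \<le> incl_prob K d a"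
  unfolding incl_prob_def
  by (cases "a \<le> d") (auto intro!: prod_nonneg divide_nonneg_nonneg simp: incl_prob_eq_0[unfolded incl_prob_def])

lemma incl_prob_le_1: "d \<le> K \<Longrightarrow> incl_prob K d a \<le> 1"
  unfolding incl_prob_def
  by (cases "a \<le> d") (auto intro!: prod_le_1 divide_nonneg_nonneg
      simp: divide_le_eq_1 incl_prob_eq_0[unfolded incl_prob_def])

lemma incl_prob_add_le:
  assumes "d \<le> K"
  shows "incl_prob K d (a + b) \<le> incl_prob K d a * incl_prob K d b"
proof (induction b)
  case 0
  then show ?case by (simp add: incl_prob_def)
next
  case (Suc b)
  show ?case
  proof (cases "d < a + Suc b")
    case True
    then show ?thesis using incl_prob_eq_0 incl_prob_nonneg[OF assms] by simp
  next
    case False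
    define g where "g = (real d - real (a + b)) / (real K - real (a + b))"
    define g' where "g' = (real d - real b) / (real K - real b)"
    have pos: "real K - real (a + b) > 0" "real K - real b > 0" using False assms by auto
    have "real a * real d \<le> real a * real K"
      using assms by (intro mult_left_mono) auto
    then have "(real d - real (a + b)) * (real K - real b) \<le> (real d - real b) * (real K - real (a + b))"
      by (simp add: algebra_simps)
    then have "g \<le> g'" unfolding g_def g'_def using pos by (simp add: divide_le_eq le_divide_eq mult.commute)
    moreover have "0 \<le> g" unfolding g_def using False pos by auto
    ultimately have "incl_prob K d (a + b) * g \<le> incl_prob K d a * incl_prob K d b * g'"
      using Suc.IH incl_prob_nonneg[OF assms]
      by (metis mult_mono mult_nonneg_nonneg order.trans)
    then show ?thesis unfolding g_def g'_def by (simp add: incl_prob_Suc mult.assoc)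
  qed
qed

lemma binomial_eq_incl_prob:
  assumes "a \<le> d" "d \<le> K"
  shows "real ((K - a) choose (d - a)) = real (K choose d) * incl_prob K d a"
  using assms(1)
proof (induction a)
  case 0
  then show ?case by (simp add: incl_prob_def)
next
  case (Suc a)
  have "Suc (K - Suc a) * ((K - Suc a) choose (d - Suc a)) =
      (Suc (K - Suc a) choose Suc (d - Suc a)) * Suc (d - Suc a)"
    by (rule Suc_times_binomial_eq)
  moreover have "Suc (K - Suc a) = K - a" "Suc (d - Suc a) = d - a"
    using Suc.prems assms by auto
  ultimately have "real (K - a) * real ((K - Suc a) choose (d - Suc a)) =
      real ((K - a) choose (d - a)) * real (d - a)"
    by (metis of_nat_mult)
  then have "real ((K - Suc a) choose (d - Suc a)) = real ((K - a) choose (d - a)) * real (d - a) / real (K - a)"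
    using Suc.prems assms by (simp add: field_simps)
  also have "\<dots> = real (K choose d) * incl_prob K d (Suc a)"
    using Suc assms by (simp add: incl_prob_Suc)
  finally show ?case .
qed

lemma card_supersets_eq:
  assumes "finite U" "card U = K" "d \<le> K" "A \<subseteq> U"
  shows "real (card {T. T \<subseteq> U \<and> card T = d \<and> A \<subseteq> T}) =
    real (card {T. T \<subseteq> U \<and> card T = d}) * incl_prob K d (card A)"
proof (cases "card A \<le> d")
  case True
  have "finite A" using assms finite_subset by blast
  have "{T. T \<subseteq> U \<and> card T = d \<and> A \<subseteq> T} = (\<lambda>T'. T' \<union> A) ` {T'. T' \<subseteq> U - A \<and> card T' = d - card A}"
  proof (intro equalityI subsetI)
    fix T assume "T \<in> {T. T \<subseteq> U \<and> card T = d \<and> A \<subseteq> T}"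
    then have "T \<subseteq> U" "card T = d" "A \<subseteq> T" "T = (T - A) \<union> A" by auto
    then show "T \<in> (\<lambda>T'. T' \<union> A) ` {T'. T' \<subseteq> U - A \<and> card T' = d - card A}"
      using \<open>finite A\<close> by (intro image_eqI[of _ _ "T - A"]) (auto simp: card_Diff_subset)
  next
    fix T assume "T \<in> (\<lambda>T'. T' \<union> A) ` {T'. T' \<subseteq> U - A \<and> card T' = d - card A}"
    then obtain T' where T': "T' \<subseteq> U - A" "card T' = d - card A" "T = T' \<union> A" by auto
    moreover have "finite T'" "T' \<inter> A = {}" using T' assms finite_subset by blast+
    ultimately have "card T = card T' + card A"
      using \<open>finite A\<close> by (simp add: card_Un_disjoint)
    then show "T \<in> {T. T \<subseteq> U \<and> card T = d \<and> A \<subseteq> T}" using T' True assms by auto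
  qed
  moreover have "inj_on (\<lambda>T'. T' \<union> A) {T'. T' \<subseteq> U - A \<and> card T' = d - card A}"
    by (rule inj_onI) blast
  ultimately have "card {T. T \<subseteq> U \<and> card T = d \<and> A \<subseteq> T} = (K - card A) choose (d - card A)"
    using assms \<open>finite A\<close> by (simp add: card_image n_subsets card_Diff_subset)
  then show ?thesis
    using binomial_eq_incl_prob[OF True assms(3)] assms by (simp add: n_subsets)
next
  case False
  then have "{T. T \<subseteq> U \<and> card T = d \<and> A \<subseteq> T} = {}"
    using assms(1) by (auto dest: card_mono[OF finite_subset])
  then show ?thesis using incl_prob_eq_0[of d "card A"] False by (simp only: card.empty)
qed

definition avg :: "'b set \<Rightarrow> ('b \<Rightarrow> real) \<Rightarrow> real" where
  "avg S g = (\<Sum>T\<in>S. g T) / real (card S)"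

definition avg_variance :: "'b set \<Rightarrow> ('b \<Rightarrow> real) \<Rightarrow> real" where
  "avg_variance S g = avg S (\<lambda>T. (g T)\<^sup>2) - (avg S g)\<^sup>2"

lemma avg_cong: "(\<And>T. T \<in> S \<Longrightarrow> f T = g T) \<Longrightarrow> avg S f = avg S g"
  unfolding avg_def by (metis sum.cong)

lemma avg_variance_cong: "(\<And>T. T \<in> S \<Longrightarrow> f T = g T) \<Longrightarrow> avg_variance S f = avg_variance S g"
  unfolding avg_variance_def by (metis (mono_tags, lifting) avg_cong)

lemma avg_sum: "avg S (\<lambda>T. \<Sum>x\<in>X. g x T) = (\<Sum>x\<in>X. avg S (g x))"
  unfolding avg_def by (simp add: sum.swap[of _ S] sum_divide_distrib)

lemma avg_cmult: "avg S (\<lambda>T. a * g T) = a * avg S g"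
  unfolding avg_def by (simp add: sum_distrib_left)

lemma avg_add: "avg S (\<lambda>T. f T + g T) = avg S f + avg S g"
  unfolding avg_def by (simp add: sum.distrib add_divide_distrib)

lemma avg_diff: "avg S (\<lambda>T. f T - g T) = avg S f - avg S g"
  unfolding avg_def by (simp add: sum_subtractf diff_divide_distrib)

lemma avg_const: "finite S \<Longrightarrow> S \<noteq> {} \<Longrightarrow> avg S (\<lambda>T. a) = a"
  unfolding avg_def by simp

lemma avg_variance_eq_avg_sq_dev:
  assumes "finite S" "S \<noteq> {}"
  shows "avg_variance S f = avg S (\<lambda>T. (f T - avg S f)\<^sup>2)"
proof -
  have "avg S (\<lambda>T. (f T - avg S f)\<^sup>2) = avg S (\<lambda>T. (f T)\<^sup>2 - (2 * avg S f) * f T + (avg S f)\<^sup>2)"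
    by (rule avg_cong) (simp add: power2_diff)
  then show ?thesis
    using assms by (simp add: avg_variance_def avg_add avg_diff avg_cmult avg_const power2_eq_square)
qed

lemma avg_variance_nonneg: "finite S \<Longrightarrow> S \<noteq> {} \<Longrightarrow> 0 \<le> avg_variance S f"
  by (simp add: avg_variance_eq_avg_sq_dev avg_def sum_nonneg)

lemma var_pmf_of_set:
  assumes "finite S" "S \<noteq> {}"
  shows "var (measure_pmf (pmf_of_set S)) f = avg_variance S f"
  unfolding var_def avg_variance_eq_avg_sq_dev[OF assms] using assms
  by (simp add: integral_pmf_of_set avg_def)

lemma avg_variance_diff_le:
  assumes "finite S" "S \<noteq> {}"
  shows "avg_variance S (\<lambda>T. f T - g T) \<le> 2 * avg_variance S f + 2 * avg_variance S g"
proof -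
  have "avg S (\<lambda>T. (f T - g T)\<^sup>2) + avg S (\<lambda>T. (f T + g T)\<^sup>2) =
      avg S (\<lambda>T. 2 * (f T)\<^sup>2 + 2 * (g T)\<^sup>2)"
    by (simp add: avg_add[symmetric] power2_diff power2_sum algebra_simps)
  then have "avg_variance S (\<lambda>T. f T - g T) + avg_variance S (\<lambda>T. f T + g T) =
      2 * avg_variance S f + 2 * avg_variance S g"
    unfolding avg_variance_def
    by (simp add: avg_add avg_diff avg_cmult power2_diff power2_sum algebra_simps)
  then show ?thesis using avg_variance_nonneg[OF assms, of "\<lambda>T. f T + g T"] by linarith
qed

abbreviation ksubsets :: "nat \<Rightarrow> nat \<Rightarrow> nat set set" where
  "ksubsets K d \<equiv> {T. T \<subseteq> {1..K} \<and> card T = d}"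

lemma finite_ksubsets: "finite (ksubsets K d)"
  by (rule finite_subset[of _ "Pow {1..K}"]) auto

lemma ksubsets_nonempty: "d \<le> K \<Longrightarrow> ksubsets K d \<noteq> {}"
  using obtain_subset_with_card_n[of d "{1..K::nat}"] by auto

lemma var_sel_law: "d \<le> K \<Longrightarrow> var (measure_pmf (sel_law K d)) f = avg_variance (ksubsets K d) f"
  unfolding sel_law_def by (intro var_pmf_of_set finite_ksubsets ksubsets_nonempty)

lemma avg_variance_ksubsets_compl:
  assumes "d \<le> K"
  shows "avg_variance (ksubsets K d) (\<lambda>T. F ({1..K} - T)) = avg_variance (ksubsets K (K - d)) F"
proof -
  let ?h = "\<lambda>T. {1..K::nat} - T"
  have inj: "inj_on ?h (ksubsets K d)" by (rule inj_onI) auto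
  have img: "?h ` ksubsets K d = ksubsets K (K - d)"
  proof (intro equalityI subsetI)
    fix X assume "X \<in> ?h ` ksubsets K d"
    then show "X \<in> ksubsets K (K - d)" by (auto simp: card_Diff_subset finite_subset)
  next
    fix X assume X: "X \<in> ksubsets K (K - d)"
    then have "card ({1..K} - X) = d" using assms by (auto simp: card_Diff_subset finite_subset)
    moreover have "X = ?h ({1..K} - X)" using X by auto
    ultimately show "X \<in> ?h ` ksubsets K d" by blast
  qed
  have "avg (ksubsets K d) (\<lambda>T. g (?h T)) = avg (ksubsets K (K - d)) g" for g
    unfolding avg_def img[symmetric] sum.reindex[OF inj] card_image[OF inj] comp_def ..
  then show ?thesis unfolding avg_variance_def by simp
qed

lemma var_sel_law_compl:
  assumes "d \<le> K"
  shows "var (measure_pmf (sel_law K d)) (\<lambda>T. F ({1..K} - T)) = var (measure_pmf (sel_law K (K - d))) F"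
  by (simp only: var_sel_law[OF assms] var_sel_law[OF diff_le_self] avg_variance_ksubsets_compl[OF assms])

lemma avg_subset_indicator:
  assumes "d \<le> K" "A \<subseteq> {1..K}"
  shows "avg (ksubsets K d) (\<lambda>T. of_bool (A \<subseteq> T)) = incl_prob K d (card A)"
proof -
  have "(\<Sum>T\<in>ksubsets K d. of_bool (A \<subseteq> T) :: real) = real (card {T. T \<subseteq> {1..K} \<and> card T = d \<and> A \<subseteq> T})"
    using finite_ksubsets by (simp add: sum_of_bool_eq Int_def conj_assoc)
  also have "\<dots> = real (card (ksubsets K d)) * incl_prob K d (card A)"
    using assms by (intro card_supersets_eq) auto
  finally show ?thesis
    unfolding avg_def using finite_ksubsets ksubsets_nonempty[OF assms(1)] by (simp add: card_gt_0_iff)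
qed

section \<open>Variance of a quadratic form in a uniform random subset\<close>

lemma sum_subset_eq_sum_indicator:
  fixes g :: "nat \<Rightarrow> real"
  assumes "T \<subseteq> {1..K}"
  shows "(\<Sum>i\<in>T. g i) = (\<Sum>i=1..K. g i * of_bool (i \<in> T))"
  using sum.inter_restrict[of "{1..K}" g T] assms by (simp add: Int_absorb1 if_distrib cong: if_cong)

lemma sum_sum_subset_eq_sum_sum_indicator:
  fixes c :: "nat \<Rightarrow> nat \<Rightarrow> real"
  assumes "T \<subseteq> {1..K}"
  shows "(\<Sum>i\<in>T. \<Sum>j\<in>T. c i j) = (\<Sum>i=1..K. \<Sum>j=1..K. c i j * of_bool ({i, j} \<subseteq> T))"
proof -
  have "(\<Sum>i=1..K. \<Sum>j=1..K. c i j * of_bool ({i, j} \<subseteq> T)) =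
      (\<Sum>i=1..K. (\<Sum>j=1..K. c i j * of_bool (j \<in> T)) * of_bool (i \<in> T))"
    unfolding sum_distrib_right by (intro sum.cong refl) auto
  also have "\<dots> = (\<Sum>i\<in>T. \<Sum>j\<in>T. c i j)"
    unfolding sum_subset_eq_sum_indicator[OF assms, symmetric] ..
  finally show ?thesis ..
qed

lemma square_sum_sum_subset:
  fixes c :: "nat \<Rightarrow> nat \<Rightarrow> real"
  assumes "T \<subseteq> {1..K}"
  shows "(\<Sum>i\<in>T. \<Sum>j\<in>T. c i j)\<^sup>2 = (\<Sum>i=1..K. \<Sum>j=1..K. \<Sum>k=1..K. \<Sum>l=1..K.
      c i j * c k l * of_bool ({i, j} \<union> {k, l} \<subseteq> T))"
  unfolding sum_sum_subset_eq_sum_sum_indicator[OF assms] power2_eq_square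
    sum_distrib_right sum_distrib_left
  by (intro sum.cong refl) auto

lemma avg_variance_quadratic_form:
  fixes c :: "nat \<Rightarrow> nat \<Rightarrow> real"
  assumes dK: "d \<le> K"
  defines "P A \<equiv> incl_prob K d (card A)"
  shows "avg_variance (ksubsets K d) (\<lambda>T. \<Sum>i\<in>T. \<Sum>j\<in>T. c i j) =
    (\<Sum>i=1..K. \<Sum>j=1..K. \<Sum>k=1..K. \<Sum>l=1..K. c i j * c k l * (P ({i, j} \<union> {k, l}) - P {i, j} * P {k, l}))"
proof -
  let ?S = "ksubsets K d"
  have mean: "avg ?S (\<lambda>T. \<Sum>i\<in>T. \<Sum>j\<in>T. c i j) = (\<Sum>i=1..K. \<Sum>j=1..K. c i j * P {i, j})"
  proof -
    have "avg ?S (\<lambda>T. \<Sum>i\<in>T. \<Sum>j\<in>T. c i j) =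
        avg ?S (\<lambda>T. \<Sum>i=1..K. \<Sum>j=1..K. c i j * of_bool ({i, j} \<subseteq> T))"
      by (rule avg_cong, rule sum_sum_subset_eq_sum_sum_indicator) auto
    also have "\<dots> = (\<Sum>i=1..K. \<Sum>j=1..K. c i j * avg ?S (\<lambda>T. of_bool ({i, j} \<subseteq> T)))"
      by (simp only: avg_sum avg_cmult)
    also have "\<dots> = (\<Sum>i=1..K. \<Sum>j=1..K. c i j * P {i, j})"
      by (intro sum.cong refl) (subst avg_subset_indicator[OF dK]; auto simp: P_def)
    finally show ?thesis .
  qed
  have second_moment: "avg ?S (\<lambda>T. (\<Sum>i\<in>T. \<Sum>j\<in>T. c i j)\<^sup>2) =
      (\<Sum>i=1..K. \<Sum>j=1..K. \<Sum>k=1..K. \<Sum>l=1..K. c i j * c k l * P ({i, j} \<union> {k, l}))"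
  proof -
    have "avg ?S (\<lambda>T. (\<Sum>i\<in>T. \<Sum>j\<in>T. c i j)\<^sup>2) = avg ?S (\<lambda>T. \<Sum>i=1..K. \<Sum>j=1..K. \<Sum>k=1..K. \<Sum>l=1..K.
        c i j * c k l * of_bool ({i, j} \<union> {k, l} \<subseteq> T))"
      by (rule avg_cong, rule square_sum_sum_subset) auto
    also have "\<dots> = (\<Sum>i=1..K. \<Sum>j=1..K. \<Sum>k=1..K. \<Sum>l=1..K.
        c i j * c k l * avg ?S (\<lambda>T. of_bool ({i, j} \<union> {k, l} \<subseteq> T)))"
      by (simp only: avg_sum avg_cmult)
    also have "\<dots> = (\<Sum>i=1..K. \<Sum>j=1..K. \<Sum>k=1..K. \<Sum>l=1..K. c i j * c k l * P ({i, j} \<union> {k, l}))"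
      by (intro sum.cong refl) (subst avg_subset_indicator[OF dK]; auto simp: P_def)
    finally show ?thesis .
  qed
  show ?thesis
    unfolding avg_variance_def mean second_moment
    unfolding power2_eq_square sum_distrib_right sum_distrib_left
    by (simp add: sum_subtractf[symmetric] algebra_simps)
qed

lemma incl_prob_pair_excess_le:
  assumes dK: "d \<le> K"
  defines "P A \<equiv> incl_prob K d (card A)"
  shows "P ({i, j} \<union> {k, l}) - P {i, j} * P {k, l} \<le>
    of_bool (k = i) + of_bool (k = j) + of_bool (l = i) + of_bool (l = j)"
proof (cases "{i, j} \<inter> {k, l} = {}")
  case True
  then have "card ({i, j} \<union> {k, l}) = card {i, j} + card {k, l}"
    by (intro card_Un_disjoint) auto
  then have "P ({i, j} \<union> {k, l}) \<le> P {i, j} * P {k, l}"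
    unfolding P_def using incl_prob_add_le[OF dK] by simp
  moreover have "0 \<le> of_bool (k = i) + of_bool (k = j) + of_bool (l = i) + (of_bool (l = j) :: real)"
    by simp
  ultimately show ?thesis by linarith
next
  case False
  then have "1 \<le> of_bool (k = i) + of_bool (k = j) + of_bool (l = i) + (of_bool (l = j) :: real)"
    by auto
  moreover have "P ({i, j} \<union> {k, l}) \<le> 1" "0 \<le> P {i, j} * P {k, l}"
    unfolding P_def using incl_prob_le_1[OF dK] incl_prob_nonneg[OF dK] by simp_all
  ultimately show ?thesis by linarith
qed

lemma sum_sum_of_bool_eq_row:
  fixes c :: "nat \<Rightarrow> nat \<Rightarrow> real"
  assumes "finite U" "i \<in> U"
  shows "(\<Sum>k\<in>U. \<Sum>l\<in>U. c k l * of_bool (k = i)) = (\<Sum>l\<in>U. c i l)"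
proof -
  have "(\<Sum>k\<in>U. \<Sum>l\<in>U. c k l * of_bool (k = i)) = (\<Sum>k\<in>U. if k = i then \<Sum>l\<in>U. c k l else 0)"
    by (intro sum.cong refl) auto
  then show ?thesis using assms by simp
qed

lemma sum_sum_of_bool_eq_col:
  fixes c :: "nat \<Rightarrow> nat \<Rightarrow> real"
  assumes "finite U" "i \<in> U"
  shows "(\<Sum>k\<in>U. \<Sum>l\<in>U. c k l * of_bool (l = i)) = (\<Sum>k\<in>U. c k i)"
proof (intro sum.cong refl)
  fix k
  have "(\<Sum>l\<in>U. c k l * of_bool (l = i)) = (\<Sum>l\<in>U. if l = i then c k l else 0)"
    by (intro sum.cong refl) auto
  then show "(\<Sum>l\<in>U. c k l * of_bool (l = i)) = c k i" using assms by simp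
qed

lemma avg_variance_quadratic_form_le:
  fixes c :: "nat \<Rightarrow> nat \<Rightarrow> real"
  assumes dK: "d \<le> K" and c_nonneg: "\<And>i j. 0 \<le> c i j" and "0 \<le> R"
    and rows: "\<And>i. i \<in> {1..K} \<Longrightarrow> (\<Sum>l=1..K. c i l) \<le> R"
    and cols: "\<And>l. l \<in> {1..K} \<Longrightarrow> (\<Sum>i=1..K. c i l) \<le> R"
  shows "avg_variance (ksubsets K d) (\<lambda>T. \<Sum>i\<in>T. \<Sum>j\<in>T. c i j) \<le> 4 * real K * R\<^sup>2"
proof -
  \<comment> \<open>Disjoint pairs \<open>{i,j}\<close>, \<open>{k,l}\<close> contribute at most \<open>0\<close> (\<open>incl_prob_add_le\<close>); an overlapping
    pair is charged to a row or column of \<open>c\<close> it shares.\<close>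
  define D where "D i j k l = of_bool (k = i) + of_bool (k = j) + of_bool (l = i) + (of_bool (l = j) :: real)"
    for i j k l :: nat
  have "avg_variance (ksubsets K d) (\<lambda>T. \<Sum>i\<in>T. \<Sum>j\<in>T. c i j) \<le>
      (\<Sum>i=1..K. \<Sum>j=1..K. c i j * (\<Sum>k=1..K. \<Sum>l=1..K. c k l * D i j k l))"
    unfolding avg_variance_quadratic_form[OF dK] sum_distrib_left mult.assoc D_def
    by (intro sum_mono mult_left_mono incl_prob_pair_excess_le[OF dK] c_nonneg)
  also have "\<dots> \<le> (\<Sum>i=1..K. \<Sum>j=1..K. c i j * (4 * R))"
  proof (intro sum_mono mult_left_mono c_nonneg)
    fix i j assume ij: "i \<in> {1..K}" "j \<in> {1..K}"
    have "(\<Sum>k=1..K. \<Sum>l=1..K. c k l * D i j k l) =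
        (\<Sum>l=1..K. c i l) + (\<Sum>l=1..K. c j l) + (\<Sum>k=1..K. c k i) + (\<Sum>k=1..K. c k j)"
      unfolding D_def distrib_left sum.distrib
        sum_sum_of_bool_eq_row[OF finite_atLeastAtMost ij(1)] sum_sum_of_bool_eq_row[OF finite_atLeastAtMost ij(2)]
        sum_sum_of_bool_eq_col[OF finite_atLeastAtMost ij(1)] sum_sum_of_bool_eq_col[OF finite_atLeastAtMost ij(2)] ..
    also have "\<dots> \<le> 4 * R"
      using rows[OF ij(1)] rows[OF ij(2)] cols[OF ij(1)] cols[OF ij(2)] by linarith
    finally show "(\<Sum>k=1..K. \<Sum>l=1..K. c k l * D i j k l) \<le> 4 * R" .
  qed
  also have "\<dots> = 4 * R * (\<Sum>i=1..K. \<Sum>j=1..K. c i j)"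
    by (simp add: sum_distrib_left algebra_simps)
  also have "\<dots> \<le> 4 * R * (\<Sum>i=1..K. R)"
    using rows \<open>0 \<le> R\<close> by (intro mult_left_mono sum_mono) auto
  also have "\<dots> = 4 * real K * R\<^sup>2"
    by (simp add: power2_eq_square)
  finally show ?thesis .
qed

lemma avg_variance_quadratic_form_abs_le:
  fixes c :: "nat \<Rightarrow> nat \<Rightarrow> real"
  assumes dK: "d \<le> K" and R: "0 \<le> R"
    and rows: "\<And>i. i \<in> {1..K} \<Longrightarrow> (\<Sum>l=1..K. \<bar>c i l\<bar>) \<le> R"
    and cols: "\<And>l. l \<in> {1..K} \<Longrightarrow> (\<Sum>i=1..K. \<bar>c i l\<bar>) \<le> R"
  shows "avg_variance (ksubsets K d) (\<lambda>T. \<Sum>i\<in>T. \<Sum>j\<in>T. c i j) \<le> 16 * real K * R\<^sup>2"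
proof -
  define pos where "pos i j = max (c i j) 0" for i j
  define neg where "neg i j = max (- c i j) 0" for i j
  have le_abs: "pos i j \<le> \<bar>c i j\<bar>" "neg i j \<le> \<bar>c i j\<bar>" for i j
    unfolding pos_def neg_def by auto
  have pos_var: "avg_variance (ksubsets K d) (\<lambda>T. \<Sum>i\<in>T. \<Sum>j\<in>T. pos i j) \<le> 4 * real K * R\<^sup>2"
  proof (rule avg_variance_quadratic_form_le[OF dK _ R])
    show "(\<Sum>l=1..K. pos i l) \<le> R" if "i \<in> {1..K}" for i
      using sum_mono[OF le_abs(1)] rows[OF that] by (rule order_trans)
    show "(\<Sum>i=1..K. pos i l) \<le> R" if "l \<in> {1..K}" for l
      using sum_mono[OF le_abs(1)] cols[OF that] by (rule order_trans)
  qed (simp add: pos_def)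
  have neg_var: "avg_variance (ksubsets K d) (\<lambda>T. \<Sum>i\<in>T. \<Sum>j\<in>T. neg i j) \<le> 4 * real K * R\<^sup>2"
  proof (rule avg_variance_quadratic_form_le[OF dK _ R])
    show "(\<Sum>l=1..K. neg i l) \<le> R" if "i \<in> {1..K}" for i
      using sum_mono[OF le_abs(2)] rows[OF that] by (rule order_trans)
    show "(\<Sum>i=1..K. neg i l) \<le> R" if "l \<in> {1..K}" for l
      using sum_mono[OF le_abs(2)] cols[OF that] by (rule order_trans)
  qed (simp add: neg_def)
  have "avg_variance (ksubsets K d) (\<lambda>T. \<Sum>i\<in>T. \<Sum>j\<in>T. c i j) =
      avg_variance (ksubsets K d) (\<lambda>T. (\<Sum>i\<in>T. \<Sum>j\<in>T. pos i j) - (\<Sum>i\<in>T. \<Sum>j\<in>T. neg i j))"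
    unfolding sum_subtractf[symmetric] pos_def neg_def
    by (intro avg_variance_cong sum.cong refl) linarith
  also have "\<dots> \<le> 16 * real K * R\<^sup>2"
    using avg_variance_diff_le[OF finite_ksubsets ksubsets_nonempty[OF dK],
        of "\<lambda>T. \<Sum>i\<in>T. \<Sum>j\<in>T. pos i j" "\<lambda>T. \<Sum>i\<in>T. \<Sum>j\<in>T. neg i j"] pos_var neg_var
    by linarith
  finally show ?thesis .
qed

lemma sum_abs_banded_le:
  fixes f :: "nat \<Rightarrow> real"
  assumes bound: "\<And>l. l \<in> {1..K} \<Longrightarrow> \<bar>f l\<bar> \<le> B"
    and band: "\<And>l. 1 < \<bar>int i - int l\<bar> \<Longrightarrow> f l = 0"
    and "0 \<le> B"
  shows "(\<Sum>l=1..K. \<bar>f l\<bar>) \<le> 3 * B"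
proof -
  have "(\<Sum>l=1..K. \<bar>f l\<bar>) = (\<Sum>l\<in>{1..K} \<inter> {i - 1..i + 1}. \<bar>f l\<bar>)"
    using band by (intro sum.mono_neutral_right) auto
  also have "\<dots> \<le> real (card ({1..K} \<inter> {i - 1..i + 1})) * B"
    using bound by (intro sum_bounded_above) auto
  also have "\<dots> \<le> 3 * B"
  proof -
    have "card ({1..K} \<inter> {i - 1..i + 1}) \<le> card {i - 1..i + 1}"
      by (intro card_mono) auto
    also have "\<dots> \<le> 3" by simp
    finally show ?thesis using \<open>0 \<le> B\<close> by (intro mult_right_mono) auto
  qed
  finally show ?thesis .
qed

lemma avg_variance_banded_form_le:
  fixes c :: "nat \<Rightarrow> nat \<Rightarrow> real"
  assumes dK: "d \<le> K" and "0 \<le> B"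
    and bound: "\<And>i j. i \<in> {1..K} \<Longrightarrow> j \<in> {1..K} \<Longrightarrow> \<bar>c i j\<bar> \<le> B"
    and band: "\<And>i j. 1 < \<bar>int i - int j\<bar> \<Longrightarrow> c i j = 0"
  shows "avg_variance (ksubsets K d) (\<lambda>T. \<Sum>i\<in>T. \<Sum>j\<in>T. c i j) \<le> 144 * real K * B\<^sup>2"
proof -
  have "avg_variance (ksubsets K d) (\<lambda>T. \<Sum>i\<in>T. \<Sum>j\<in>T. c i j) \<le> 16 * real K * (3 * B)\<^sup>2"
  proof (rule avg_variance_quadratic_form_abs_le[OF dK])
    show "0 \<le> 3 * B" using \<open>0 \<le> B\<close> by simp
    show "(\<Sum>l=1..K. \<bar>c i l\<bar>) \<le> 3 * B" if "i \<in> {1..K}" for i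
      using bound that band \<open>0 \<le> B\<close> by (intro sum_abs_banded_le) auto
    show "(\<Sum>i=1..K. \<bar>c i l\<bar>) \<le> 3 * B" if "l \<in> {1..K}" for l
      using bound that band \<open>0 \<le> B\<close> by (intro sum_abs_banded_le[of K _ B l]) (auto simp: abs_minus_commute)
  qed
  then show ?thesis by (simp add: power_mult_distrib)
qed

lemma tendsto_ereal_bounded_imp_tendsto:
  fixes f :: "'b \<Rightarrow> real"
  assumes lim: "((\<lambda>n. ereal (f n)) \<longlongrightarrow> L) F"
    and bounded: "eventually (\<lambda>n. \<bar>f n\<bar> \<le> b) F" and "F \<noteq> bot"
  obtains l where "(f \<longlongrightarrow> l) F" "\<bar>l\<bar> \<le> b"
proof -
  have "L \<le> ereal b"
    using bounded by (intro tendsto_le[OF \<open>F \<noteq> bot\<close> tendsto_const lim]) (auto elim: eventually_mono)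
  moreover have "ereal (- b) \<le> L"
    using bounded by (intro tendsto_le[OF \<open>F \<noteq> bot\<close> lim tendsto_const]) (auto elim: eventually_mono)
  ultimately obtain l where "L = ereal l" "\<bar>l\<bar> \<le> b"
    by (cases L) auto
  then show ?thesis using lim that by simp
qed

lemma tendsto_zero_if_le_const_over_n:
  fixes a :: "nat \<Rightarrow> real"
  assumes "\<And>n. n \<ge> 1 \<Longrightarrow> 0 \<le> a n" "\<And>n. n \<ge> 1 \<Longrightarrow> a n \<le> c / real n"
  shows "a \<longlonglongrightarrow> 0"
  by (rule tendsto_sandwich[OF _ _ tendsto_const lim_const_over_n[of c]])
    (use assms in \<open>auto intro: eventually_mono[OF eventually_ge_at_top[of 1]]\<close>)

section \<open>The moving-average model\<close>

locale ma1_weights =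
  fixes M :: "nat \<Rightarrow> 'a measure"
    and W :: "nat \<Rightarrow> nat \<Rightarrow> 'a \<Rightarrow> real"
    and p :: "nat \<Rightarrow> nat \<Rightarrow> real"
    and \<rho> C \<epsilon> :: real
  assumes prob: "\<And>K. prob_space (M K)"
    and meas: "\<And>K i. i \<in> {1..K} \<Longrightarrow> W K i \<in> borel_measurable (M K)"
    and sq_int: "\<And>K i. i \<in> {1..K} \<Longrightarrow> integrable (M K) (\<lambda>x. (W K i x)\<^sup>2)"
    and MA1: "\<And>K i j. i \<in> {1..K} \<Longrightarrow> j \<in> {1..K} \<Longrightarrow>
        cov (M K) (W K i) (W K j) =
          (if i = j then 1 else 0) + \<rho> * (if \<bar>int i - int j\<bar> = 1 then 1 else 0)"
    and rho_bd: "\<bar>\<rho>\<bar> < 1/2"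
    and MA2: "\<And>K i. K \<ge> 1 \<Longrightarrow> i \<in> {1..K} \<Longrightarrow> \<bar>p K i\<bar> \<le> C / sqrt (real K)"
    and eps_pos: "0 < \<epsilon>"
    and MA4: "\<And>K. K \<ge> 1 \<Longrightarrow> var (M K) (\<lambda>x. \<Sum>i=1..K. p K i * W K i x) > \<epsilon>"
begin

definition sum_sq :: "nat \<Rightarrow> real" where
  "sum_sq K = (\<Sum>i=1..K. (p K i)\<^sup>2)"

definition sum_adj :: "nat \<Rightarrow> real" where
  "sum_adj K = (\<Sum>i\<in>{1..<K}. p K i * p K (i+1))"

lemma var_weighted_sum: "var (M K) (\<lambda>x. \<Sum>i=1..K. p K i * W K i x) = sum_sq K + 2 * \<rho> * sum_adj K"
  unfolding sum_sq_def sum_adj_def by (rule var_sum_tridiagonal[OF prob meas sq_int MA1])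

lemma cov_weighted:
  "i \<in> {1..K} \<Longrightarrow> j \<in> {1..K} \<Longrightarrow> cov (M K) (\<lambda>x. p K i * W K i x) (\<lambda>x. p K j * W K j x) =
    p K i * p K j * ((if i = j then 1 else 0) + \<rho> * (if \<bar>int i - int j\<bar> = 1 then 1 else 0))"
  by (simp add: cov_cmult MA1)

lemma var_weighted: "i \<in> {1..K} \<Longrightarrow> var (M K) (\<lambda>x. p K i * W K i x) = (p K i)\<^sup>2"
  by (simp add: var_eq_cov cov_weighted power2_eq_square)

lemma C_nonneg: "0 \<le> C"
  using MA2[of 1 1] by simp

lemma sum_sq_le: "K \<ge> 1 \<Longrightarrow> sum_sq K \<le> C\<^sup>2"
proof -
  assume "K \<ge> 1"
  have "(p K i)\<^sup>2 \<le> C\<^sup>2 / real K" if "i \<in> {1..K}" for i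
    using power_mono[OF MA2[OF \<open>K \<ge> 1\<close> that], of 2] \<open>K \<ge> 1\<close> by (simp add: power_divide)
  then have "sum_sq K \<le> (\<Sum>i=1..K. C\<^sup>2 / real K)"
    unfolding sum_sq_def by (intro sum_mono) auto
  then show ?thesis using \<open>K \<ge> 1\<close> by simp
qed

lemma abs_rho_sum_adj_le: "\<bar>\<rho> * sum_adj K\<bar> \<le> \<bar>\<rho>\<bar> * sum_sq K"
  unfolding abs_mult sum_adj_def sum_sq_def
  by (intro mult_left_mono abs_sum_adjacent_le_sum_squares) simp

lemma var_weighted_sum_le: "var (M K) (\<lambda>x. \<Sum>i=1..K. p K i * W K i x) \<le> 2 * sum_sq K"
proof -
  have "0 \<le> sum_sq K" unfolding sum_sq_def by (simp add: sum_nonneg)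
  then have "\<bar>\<rho> * sum_adj K\<bar> \<le> sum_sq K / 2"
    using abs_rho_sum_adj_le[of K] rho_bd mult_right_mono[of "\<bar>\<rho>\<bar>" "1/2" "sum_sq K"] by linarith
  then show ?thesis unfolding var_weighted_sum by (simp add: abs_le_iff)
qed

lemma sum_sq_pos: "K \<ge> 1 \<Longrightarrow> 0 < sum_sq K"
  using var_weighted_sum_le[of K] MA4[of K] eps_pos by linarith

lemma condition_P1:
  "\<exists>\<epsilon> Mb. 0 < \<epsilon> \<and> \<epsilon> \<le> Mb \<and>
     (\<forall>K\<ge>1. \<epsilon> \<le> var (M K) (\<lambda>x. \<Sum>i=1..K. p K i * W K i x)
            \<and> var (M K) (\<lambda>x. \<Sum>i=1..K. p K i * W K i x) \<le> Mb)"
proof (intro exI conjI allI impI)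
  show "\<epsilon> \<le> 2 * C\<^sup>2 + \<epsilon>" by simp
  fix K :: nat assume "K \<ge> 1"
  then show "\<epsilon> \<le> var (M K) (\<lambda>x. \<Sum>i=1..K. p K i * W K i x)"
    using MA4 by (simp add: less_imp_le)
  show "var (M K) (\<lambda>x. \<Sum>i=1..K. p K i * W K i x) \<le> 2 * C\<^sup>2 + \<epsilon>"
    using var_weighted_sum_le[of K] sum_sq_le[OF \<open>K \<ge> 1\<close>] eps_pos by linarith
qed (rule eps_pos)

lemma condition_P3:
  assumes "\<exists>L::ereal. ((\<lambda>K. ereal (\<rho> * (\<Sum>i=1..K-1. p K i * p K (i+1))
                                  / (\<Sum>i=1..K. (p K i)\<^sup>2))) \<longlongrightarrow> L) sequentially"
  shows "\<exists>L::real. (\<lambda>K. (\<Sum>i=1..K. var (M K) (\<lambda>x. p K i * W K i x))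
                      / var (M K) (\<lambda>x. \<Sum>i=1..K. p K i * W K i x)) \<longlonglongrightarrow> L"
proof -
  define t where "t K = \<rho> * sum_adj K / sum_sq K" for K
  have "{1..K - 1} = {1..<K::nat}" for K by auto
  then obtain L where L: "((\<lambda>K. ereal (t K)) \<longlongrightarrow> L) sequentially"
    using assms unfolding t_def sum_adj_def sum_sq_def by auto
  have bounded: "eventually (\<lambda>K. \<bar>t K\<bar> \<le> \<bar>\<rho>\<bar>) sequentially"
    using eventually_ge_at_top[of 1]
  proof (rule eventually_mono)
    fix K :: nat assume "K \<ge> 1"
    then show "\<bar>t K\<bar> \<le> \<bar>\<rho>\<bar>"
      using abs_rho_sum_adj_le[of K] sum_sq_pos[of K] unfolding t_def by (simp add: divide_le_eq)
  qed
  obtain l where "t \<longlonglongrightarrow> l" "\<bar>l\<bar> \<le> \<bar>\<rho>\<bar>"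
    by (rule tendsto_ereal_bounded_imp_tendsto[OF L bounded sequentially_bot])
  then have lim: "(\<lambda>K. 1 / (1 + 2 * t K)) \<longlonglongrightarrow> 1 / (1 + 2 * l)"
    using rho_bd by (intro tendsto_intros) auto
  have ratio: "eventually (\<lambda>K. 1 / (1 + 2 * t K) = (\<Sum>i=1..K. var (M K) (\<lambda>x. p K i * W K i x))
      / var (M K) (\<lambda>x. \<Sum>i=1..K. p K i * W K i x)) sequentially"
    using eventually_ge_at_top[of 1]
  proof (rule eventually_mono)
    fix K :: nat assume "K \<ge> 1"
    have "(\<Sum>i=1..K. var (M K) (\<lambda>x. p K i * W K i x)) = sum_sq K"
      unfolding sum_sq_def by (intro sum.cong refl var_weighted)
    then show "1 / (1 + 2 * t K) = (\<Sum>i=1..K. var (M K) (\<lambda>x. p K i * W K i x))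
        / var (M K) (\<lambda>x. \<Sum>i=1..K. p K i * W K i x)"
      using sum_sq_pos[OF \<open>K \<ge> 1\<close>] unfolding var_weighted_sum t_def by (simp add: field_simps)
  qed
  show ?thesis
    using Lim_transform_eventually[OF lim ratio] ..
qed

lemma var_sel_law_cov_form_le:
  assumes "K \<ge> 1" "d \<le> K"
  shows "var (measure_pmf (sel_law K d))
      (\<lambda>T. \<Sum>i\<in>T. \<Sum>j\<in>T. cov (M K) (\<lambda>x. p K i * W K i x) (\<lambda>x. p K j * W K j x))
    \<le> 144 * C ^ 4 / real K"
proof -
  define c where "c i j = p K i * p K j *
      ((if i = j then 1 else 0) + \<rho> * (if \<bar>int i - int j\<bar> = 1 then 1 else 0))" for i j
  have "var (measure_pmf (sel_law K d))
      (\<lambda>T. \<Sum>i\<in>T. \<Sum>j\<in>T. cov (M K) (\<lambda>x. p K i * W K i x) (\<lambda>x. p K j * W K j x)) =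
      avg_variance (ksubsets K d) (\<lambda>T. \<Sum>i\<in>T. \<Sum>j\<in>T. c i j)"
    unfolding var_sel_law[OF \<open>d \<le> K\<close>] c_def
    by (intro avg_variance_cong sum.cong refl) (subst cov_weighted; auto)
  also have "\<dots> \<le> 144 * real K * (C\<^sup>2 / real K)\<^sup>2"
  proof (rule avg_variance_banded_form_le[OF \<open>d \<le> K\<close>])
    show "\<bar>c i j\<bar> \<le> C\<^sup>2 / real K" if "i \<in> {1..K}" "j \<in> {1..K}" for i j
    proof -
      have "\<bar>p K i\<bar> * \<bar>p K j\<bar> \<le> (C / sqrt (real K)) * (C / sqrt (real K))"
        using MA2[OF \<open>K \<ge> 1\<close>] that C_nonneg by (intro mult_mono) auto
      also have "\<dots> = C\<^sup>2 / real K"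
        using \<open>K \<ge> 1\<close> by (simp add: power2_eq_square)
      finally have "\<bar>p K i\<bar> * \<bar>p K j\<bar> \<le> C\<^sup>2 / real K" .
      moreover have "\<bar>(if i = j then 1 else 0) + \<rho> * (if \<bar>int i - int j\<bar> = 1 then 1 else 0)\<bar> \<le> 1"
        using rho_bd by auto
      ultimately have "\<bar>c i j\<bar> \<le> C\<^sup>2 / real K * 1"
        unfolding c_def abs_mult by (intro mult_mono) auto
      then show ?thesis by simp
    qed
  qed (auto simp: c_def)
  also have "\<dots> = 144 * C ^ 4 / real K"
    using \<open>K \<ge> 1\<close> by (simp add: power2_eq_square power4_eq_xxxx)
  finally show ?thesis .
qed

lemma condition_P2:
  assumes d1_le: "\<And>K. d1 K \<le> K"
  shows "(\<lambda>K. var (measure_pmf (sel_law K (d1 K)))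
          (\<lambda>T. \<Sum>i\<in>T. \<Sum>j\<in>T. cov (M K) (\<lambda>x. p K i * W K i x) (\<lambda>x. p K j * W K j x)))
       \<longlonglongrightarrow> 0"
    and "(\<lambda>K. var (measure_pmf (sel_law K (d1 K)))
          (\<lambda>T. \<Sum>i\<in>{1..K} - T. \<Sum>j\<in>{1..K} - T.
                 cov (M K) (\<lambda>x. p K i * W K i x) (\<lambda>x. p K j * W K j x)))
       \<longlonglongrightarrow> 0"
proof -
  show "(\<lambda>K. var (measure_pmf (sel_law K (d1 K)))
          (\<lambda>T. \<Sum>i\<in>T. \<Sum>j\<in>T. cov (M K) (\<lambda>x. p K i * W K i x) (\<lambda>x. p K j * W K j x)))
       \<longlonglongrightarrow> 0"
    using var_sel_law_cov_form_le[OF _ d1_le] by (intro tendsto_zero_if_le_const_over_n var_nonneg)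
  show "(\<lambda>K. var (measure_pmf (sel_law K (d1 K)))
          (\<lambda>T. \<Sum>i\<in>{1..K} - T. \<Sum>j\<in>{1..K} - T.
                 cov (M K) (\<lambda>x. p K i * W K i x) (\<lambda>x. p K j * W K j x)))
       \<longlonglongrightarrow> 0"
  proof (intro tendsto_zero_if_le_const_over_n var_nonneg)
    fix K :: nat assume "K \<ge> 1"
    show "var (measure_pmf (sel_law K (d1 K)))
          (\<lambda>T. \<Sum>i\<in>{1..K} - T. \<Sum>j\<in>{1..K} - T.
                 cov (M K) (\<lambda>x. p K i * W K i x) (\<lambda>x. p K j * W K j x))
        \<le> 144 * C ^ 4 / real K"
      unfolding var_sel_law_compl[OF d1_le, of K
          "\<lambda>X. \<Sum>i\<in>X. \<Sum>j\<in>X. cov (M K) (\<lambda>x. p K i * W K i x) (\<lambda>x. p K j * W K j x)"]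
      using \<open>K \<ge> 1\<close> by (intro var_sel_law_cov_form_le) auto
  qed
qed

end

theorem mainTheorem8:
  fixes M :: "nat \<Rightarrow> 'a measure"
    and W :: "nat \<Rightarrow> nat \<Rightarrow> 'a \<Rightarrow> real"
    and p :: "nat \<Rightarrow> nat \<Rightarrow> real"
    and d1 :: "nat \<Rightarrow> nat"
    and r \<rho> C \<epsilon> :: real
  assumes prob: "\<And>K. prob_space (M K)"
    and meas: "\<And>K i. i \<in> {1..K} \<Longrightarrow> W K i \<in> borel_measurable (M K)"
    and sq_int: "\<And>K i. i \<in> {1..K} \<Longrightarrow> integrable (M K) (\<lambda>x. (W K i x)\<^sup>2)"
    and d1_le: "\<And>K. d1 K \<le> K"
    and d1_lim: "filterlim d1 at_top sequentially"
    and r_pos: "0 < r"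
    and ratio_lim: "(\<lambda>K. real (K - d1 K) / real (d1 K)) \<longlonglongrightarrow> r"
    and MA1: "\<And>K i j. i \<in> {1..K} \<Longrightarrow> j \<in> {1..K} \<Longrightarrow>
        cov (M K) (W K i) (W K j) =
          (if i = j then 1 else 0) + \<rho> * (if \<bar>int i - int j\<bar> = 1 then 1 else 0)"
    and rho_bd: "\<bar>\<rho>\<bar> < 1/2"
    and MA2: "\<And>K i. K \<ge> 1 \<Longrightarrow> i \<in> {1..K} \<Longrightarrow> \<bar>p K i\<bar> \<le> C / sqrt (real K)"
    and MA3: "\<exists>L::ereal. ((\<lambda>K. ereal (\<rho> * (\<Sum>i=1..K-1. p K i * p K (i+1))
                                  / (\<Sum>i=1..K. (p K i)\<^sup>2))) \<longlongrightarrow> L) sequentially"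
    and eps_pos: "0 < \<epsilon>"
    and MA4: "\<And>K. K \<ge> 1 \<Longrightarrow> var (M K) (\<lambda>x. \<Sum>i=1..K. p K i * W K i x) > \<epsilon>"
  shows "cond_P M W p d1"
proof -
  interpret ma1_weights M W p \<rho> C \<epsilon>
    by (rule ma1_weights.intro) (fact prob meas sq_int MA1 rho_bd MA2 eps_pos MA4)+
  show ?thesis
    unfolding cond_P_def using condition_P1 condition_P2[OF d1_le] condition_P3[OF MA3] by blast
qed

end
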